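(* Let $r(\cdot)\in\mathcal{P}^{\log}(\mathbb{R})$ with $r(x)=2$ for all $x\in[2,5]$ and $r^-_{[-7,14]}>1$. Then the kernel $\tilde K(x,y)=K_1(y)K_2(x-y-1)$ belongs to $H_{r(\cdot)}=H_{r(\cdot),1}\cap H_{r(\cdot),2}$.
   Context: Here $n=1$. Fix $\beta>0$; $K_1(t)=\chi_{[2,3]}(t)$ and $K_2(t)=t^{-1/2}\big[\log(e/t)\big]^{-\frac{1+\beta}{2}}\chi_{(0,1)}(t)$. Cubes are intervals $Q$; $mQ$ is the concentric interval of length $m\ell(Q)$. $\|f\|_{p(\cdot)}=\inf\{\lambda>0:\int_{\{p<\infty\}}|f/\lambda|^{p(x)}dx+\|(f/\lambda)\chi_{\{p=\infty\}}\|_\infty\le1\}$. $\mathcal{P}^{\log}(\mathbb{R})$: $1/p$ satisfies $|1/p(x)-1/p(y)|\le c_0/(-\log|x-y|)$ for $|x-y|<1/2$ and $|1/p(x)-1/p_\infty|\le c_\infty/\log(e+|x|)$. $r^-_E=\operatorname{ess\,inf}_Er$. $K\in H_{r(\cdot),1}$ means $\sup_Q\sup_{x,z\in\frac12Q}\sum_{m\ge1}2^m\ell(Q)\frac{\|[K(x,\cdot)-K(z,\cdot)]\chi_{2^mQ\setminus2^{m-1}Q}\|_{r(\cdot)}}{\|\chi_{2^mQ}\|_{r(\cdot)}}<\infty$; $K\in H_{r(\cdot),2}$ is the same with $K(\cdot,x)-K(\cdot,z)$. *)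

theory Defs
  imports "HOL-Analysis.Analysis"
begin

text \<open>Variable exponents are functions p :: real \<Rightarrow> ereal (values in [1,\<infinity>]).
  Reciprocal 1/p, with 1/\<infinity> = 0.\<close>
definition recip :: "ereal \<Rightarrow> real" where
  "recip q = (if q = \<infinity> then 0 else 1 / real_of_ereal q)"

definition ess_sup_enn :: "(real \<Rightarrow> ennreal) \<Rightarrow> ennreal" where
  "ess_sup_enn g = Inf {a. AE x in lborel. g x \<le> a}"

definition ess_inf_on :: "real set \<Rightarrow> (real \<Rightarrow> ereal) \<Rightarrow> ereal" where
  "ess_inf_on E r = Sup {a. AE x in lborel. x \<in> E \<longrightarrow> a \<le> r x}"

definition var_modular :: "(real \<Rightarrow> ereal) \<Rightarrow> (real \<Rightarrow> real) \<Rightarrow> ennreal" where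
  "var_modular p f =
     (\<integral>\<^sup>+ x. indicator {y. p y < \<infinity>} x * ennreal (\<bar>f x\<bar> powr real_of_ereal (p x)) \<partial>lborel)
     + ess_sup_enn (\<lambda>x. ennreal (\<bar>f x\<bar>) * indicator {y. p y = \<infinity>} x)"

text \<open>Luxemburg norm ||f||_{p(.)} (value \<top> if the defining set is empty).\<close>
definition var_norm :: "(real \<Rightarrow> ereal) \<Rightarrow> (real \<Rightarrow> real) \<Rightarrow> ennreal" where
  "var_norm p f = Inf {ennreal t | t. t > 0 \<and> var_modular p (\<lambda>x. f x / t) \<le> 1}"

definition P_log :: "(real \<Rightarrow> ereal) \<Rightarrow> bool" where
  "P_log p \<longleftrightarrow> p \<in> borel_measurable borel \<and> (\<forall>x. 1 \<le> p x) \<and>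
     (\<exists>c0. \<forall>x y. x \<noteq> y \<and> \<bar>x - y\<bar> < 1/2 \<longrightarrow>
            \<bar>recip (p x) - recip (p y)\<bar> \<le> c0 / (- ln \<bar>x - y\<bar>)) \<and>
     (\<exists>pinf cinf. 1 \<le> pinf \<and> (\<forall>x. \<bar>recip (p x) - recip pinf\<bar> \<le> cinf / ln (exp 1 + \<bar>x\<bar>)))"

definition cube :: "real \<Rightarrow> real \<Rightarrow> real set" where
  "cube c l = {c - l/2 .. c + l/2}"

definition annulus_term ::
  "(real \<Rightarrow> ereal) \<Rightarrow> (real \<Rightarrow> real) \<Rightarrow> real \<Rightarrow> real \<Rightarrow> nat \<Rightarrow> ennreal" where
  "annulus_term r g c l m =
     ennreal (2 ^ m * l) *
     var_norm r (\<lambda>y. g y * indicator (cube c (2 ^ m * l) - cube c (2 ^ (m - 1) * l)) y)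
     / var_norm r (indicator (cube c (2 ^ m * l)))"

definition H1 :: "(real \<Rightarrow> ereal) \<Rightarrow> (real \<Rightarrow> real \<Rightarrow> real) \<Rightarrow> bool" where
  "H1 r K \<longleftrightarrow>
     (SUP (c, l, x, z) \<in> {(c, l, x, z). l > 0 \<and> x \<in> cube c (l/2) \<and> z \<in> cube c (l/2)}.
        (\<Sum>m. annulus_term r (\<lambda>y. K x y - K z y) c l (Suc m))) < (\<infinity>::ennreal)"

definition H2 :: "(real \<Rightarrow> ereal) \<Rightarrow> (real \<Rightarrow> real \<Rightarrow> real) \<Rightarrow> bool" where
  "H2 r K \<longleftrightarrow>
     (SUP (c, l, x, z) \<in> {(c, l, x, z). l > 0 \<and> x \<in> cube c (l/2) \<and> z \<in> cube c (l/2)}.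
        (\<Sum>m. annulus_term r (\<lambda>y. K y x - K y z) c l (Suc m))) < (\<infinity>::ennreal)"

definition K1 :: "real \<Rightarrow> real" where
  "K1 t = indicator {2..3} t"

definition K2 :: "real \<Rightarrow> real \<Rightarrow> real" where
  "K2 \<beta> t = (if 0 < t \<and> t < 1
     then t powr (-1/2) * (ln (exp 1 / t)) powr (-(1 + \<beta>)/2) else 0)"

end

theory Submission
  imports Defs "HOL-Real_Asymp.Real_Asymp"
begin

(* Both differences y |-> K~(x,y) - K~(z,y) and y |-> K~(y,x) - K~(y,z) vanish outside [2,5],
   where r = 2, so their r(.)-norms are L^2 norms.  Since the integral of 1/(t (1 - ln t)^(1+beta))
   over (0,1) is 1/beta, K2 has L^2 norm beta^(-1/2) and each difference has norm at most
   2/sqrt beta.  The differences are also supported at distance between 1 and 2 from x or z, so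
   for an interval Q with x, z in Q/2 the annulus 2^m Q - 2^(m-1) Q meets the support only if
   4/5 < 2^(m-1) l(Q) < 8.  This happens for at most four m, and for those |2^m Q| >= 1 gives
   ||chi_(2^m Q)||_r(.) >= 1, so both sums are at most 4 * 16 * 2/sqrt beta, uniformly in Q, x, z. *)

section \<open>Variable exponent norms\<close>

lemma var_norm_le_of_exponent_2:
  assumes [measurable]: "g \<in> borel_measurable borel"
    and exponent: "\<And>y. g y \<noteq> 0 \<Longrightarrow> r y = 2"
    and M: "0 < M"
    and L2: "(\<integral>\<^sup>+y. ennreal ((g y)\<^sup>2) \<partial>lborel) \<le> ennreal (M\<^sup>2)"
  shows "var_norm r g \<le> ennreal M"
proof -
  have "(\<integral>\<^sup>+x. indicator {y. r y < \<infinity>} x * ennreal (\<bar>g x / M\<bar> powr real_of_ereal (r x)) \<partial>lborel)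
      = (\<integral>\<^sup>+y. ennreal ((g y)\<^sup>2) * ennreal (1 / M\<^sup>2) \<partial>lborel)"
  proof (rule nn_integral_cong)
    fix x
    show "indicator {y. r y < \<infinity>} x * ennreal (\<bar>g x / M\<bar> powr real_of_ereal (r x))
        = ennreal ((g x)\<^sup>2) * ennreal (1 / M\<^sup>2)"
      using exponent[of x] M
      by (cases "g x = 0") (auto simp: power_divide ennreal_mult[symmetric])
  qed
  also have "\<dots> = (\<integral>\<^sup>+y. ennreal ((g y)\<^sup>2) \<partial>lborel) * ennreal (1 / M\<^sup>2)"
    by (rule nn_integral_multc) measurable
  also have "\<dots> \<le> ennreal (M\<^sup>2) * ennreal (1 / M\<^sup>2)"
    using L2 by (rule mult_right_mono) simp
  also have "\<dots> = 1"
    using M by (simp add: ennreal_mult[symmetric])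
  finally have integral_part: "(\<integral>\<^sup>+x. indicator {y. r y < \<infinity>} x
      * ennreal (\<bar>g x / M\<bar> powr real_of_ereal (r x)) \<partial>lborel) \<le> 1" .
  have "(\<lambda>x. ennreal \<bar>g x / M\<bar> * indicator {y. r y = \<infinity>} x) = (\<lambda>x. 0)"
    using exponent by (force simp: fun_eq_iff)
  then have "ess_sup_enn (\<lambda>x. ennreal \<bar>g x / M\<bar> * indicator {y. r y = \<infinity>} x) = 0"
    by (simp add: ess_sup_enn_def bot_ennreal[symmetric])
  with integral_part have "var_modular r (\<lambda>x. g x / M) \<le> 1"
    by (simp add: var_modular_def)
  then show ?thesis
    unfolding var_norm_def using M by (intro Inf_lower) blast
qed

lemma var_norm_zero: "var_norm r (\<lambda>y. 0) = 0"
proof -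
  have "var_norm r (\<lambda>y. 0) \<le> 0 + ennreal e" if "0 < e" for e
    using var_norm_le_of_exponent_2[of "\<lambda>y. 0" r e] that by simp
  then show ?thesis
    using ennreal_le_epsilon by (metis le_zero_eq)
qed

lemma ess_sup_enn_ge:
  assumes [measurable]: "B \<in> sets lborel" and "emeasure lborel B \<noteq> 0"
    and "\<And>x. x \<in> B \<Longrightarrow> c \<le> g x"
  shows "c \<le> ess_sup_enn g"
  unfolding ess_sup_enn_def
proof (rule Inf_greatest)
  fix a assume "a \<in> {a. AE x in lborel. g x \<le> a}"
  then have "AE x in lborel. g x \<le> a" by simp
  show "c \<le> a"
  proof (rule ccontr)
    assume "\<not> c \<le> a"
    from \<open>AE x in lborel. g x \<le> a\<close> have "AE x in lborel. x \<notin> B"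
      by (rule eventually_mono) (use assms(3) \<open>\<not> c \<le> a\<close> order_trans in blast)
    then have "emeasure lborel B = 0"
      using AE_iff_measurable[of B lborel "\<lambda>x. x \<notin> B"] assms(1) by auto
    with assms(2) show False by simp
  qed
qed

lemma var_modular_indicator_ge_finite_part:
  assumes [measurable]: "r \<in> borel_measurable borel" "E \<in> sets borel"
    and r_ge_1: "\<And>x. 1 \<le> r x" and t: "0 < t" "t \<le> 1"
  shows "ennreal (1 / t) * emeasure lborel (E \<inter> {x. r x < \<infinity>})
    \<le> var_modular r (\<lambda>x. indicator E x / t)"
proof -
  let ?A = "E \<inter> {x. r x < \<infinity>}"
  have "ennreal (1 / t) * emeasure lborel ?A = (\<integral>\<^sup>+x. ennreal (1 / t) * indicator ?A x \<partial>lborel)"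
    by (rule nn_integral_cmult_indicator[symmetric]) measurable
  also have "\<dots> \<le> (\<integral>\<^sup>+x. indicator {y. r y < \<infinity>} x
      * ennreal (\<bar>indicator E x / t\<bar> powr real_of_ereal (r x)) \<partial>lborel)"
  proof (rule nn_integral_mono)
    fix x
    show "ennreal (1 / t) * indicator ?A x
        \<le> indicator {y. r y < \<infinity>} x * ennreal (\<bar>indicator E x / t\<bar> powr real_of_ereal (r x))"
    proof (cases "x \<in> ?A")
      case True
      then obtain v where v: "r x = ereal v" "1 \<le> v"
        using r_ge_1[of x] by (cases "r x") auto
      have "(1 / t) powr 1 \<le> (1 / t) powr v"
        using v t by (intro powr_mono) auto
      with True v t show ?thesis
        by (auto intro!: ennreal_leI)
    qed simp
  qed
  also have "\<dots> \<le> var_modular r (\<lambda>x. indicator E x / t)"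
    unfolding var_modular_def by (simp add: add_increasing2)
  finally show ?thesis .
qed

lemma var_modular_indicator_ge_infinite_part:
  assumes [measurable]: "r \<in> borel_measurable borel" "E \<in> sets borel"
    and "0 < t" and "emeasure lborel (E \<inter> {x. r x = \<infinity>}) \<noteq> 0"
  shows "ennreal (1 / t) \<le> var_modular r (\<lambda>x. indicator E x / t)"
proof -
  have "ennreal (1 / t) \<le> ess_sup_enn (\<lambda>x. ennreal \<bar>indicator E x / t\<bar> * indicator {y. r y = \<infinity>} x)"
  proof (rule ess_sup_enn_ge)
    show "E \<inter> {x. r x = \<infinity>} \<in> sets lborel"
      by measurable
    show "emeasure lborel (E \<inter> {x. r x = \<infinity>}) \<noteq> 0"
      by fact
    show "ennreal (1 / t) \<le> ennreal \<bar>indicator E x / t\<bar> * indicator {y. r y = \<infinity>} x"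
      if "x \<in> E \<inter> {x. r x = \<infinity>}" for x
      using that \<open>0 < t\<close> by simp
  qed
  also have "\<dots> \<le> var_modular r (\<lambda>x. indicator E x / t)"
    unfolding var_modular_def by (simp add: add_increasing)
  finally show ?thesis .
qed

lemma one_le_var_norm_indicator:
  assumes [measurable]: "r \<in> borel_measurable borel" "E \<in> sets borel"
    and r_ge_1: "\<And>x. 1 \<le> r x" and E: "1 \<le> emeasure lborel E"
  shows "1 \<le> var_norm r (indicator E)"
  unfolding var_norm_def
proof (rule Inf_greatest)
  fix u assume "u \<in> {ennreal t | t. 0 < t \<and> var_modular r (\<lambda>x. indicator E x / t) \<le> 1}"
  then obtain t where u: "u = ennreal t" and "0 < t"
    and modular: "var_modular r (\<lambda>x. indicator E x / t) \<le> 1"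
    by blast
  let ?A = "E \<inter> {x. r x < \<infinity>}" and ?B = "E \<inter> {x. r x = \<infinity>}"
  have "\<not> t < 1"
  proof
    assume "t < 1"
    with \<open>0 < t\<close> have one_less: "1 < ennreal (1 / t)"
      using ennreal_lessI[of "1 / t" 1] by simp
    have "ennreal (1 / t) \<le> var_modular r (\<lambda>x. indicator E x / t)"
    proof (cases "emeasure lborel ?B = 0")
      case True
      have "E = ?A \<union> ?B"
        using less_top by auto
      with E have "1 \<le> emeasure lborel (?A \<union> ?B)"
        by simp
      also have "\<dots> \<le> emeasure lborel ?A + emeasure lborel ?B"
        by (rule emeasure_subadditive) measurable
      finally have "1 \<le> emeasure lborel ?A + emeasure lborel ?B" .
      with True have "1 \<le> emeasure lborel ?A"
        by simp
      then have "ennreal (1 / t) \<le> ennreal (1 / t) * emeasure lborel ?A"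
        using mult_left_mono[of 1 _ "ennreal (1 / t)"] by simp
      also have "\<dots> \<le> var_modular r (\<lambda>x. indicator E x / t)"
        using r_ge_1 \<open>0 < t\<close> \<open>t < 1\<close> by (intro var_modular_indicator_ge_finite_part) auto
      finally show ?thesis .
    next
      case False
      with assms(1,2) \<open>0 < t\<close> show ?thesis
        by (rule var_modular_indicator_ge_infinite_part)
    qed
    with one_less modular show False
      by (metis leD order_trans)
  qed
  with u show "1 \<le> u"
    by simp
qed

lemma nn_integral_square_le_of_abs_le_add:
  fixes g h1 h2 :: "real \<Rightarrow> real"
  assumes [measurable]: "h1 \<in> borel_measurable borel" "h2 \<in> borel_measurable borel"
    and bound: "\<And>y. \<bar>g y\<bar> \<le> \<bar>h1 y\<bar> + \<bar>h2 y\<bar>"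
  shows "(\<integral>\<^sup>+y. ennreal ((g y)\<^sup>2) \<partial>lborel)
    \<le> 2 * (\<integral>\<^sup>+y. ennreal ((h1 y)\<^sup>2) \<partial>lborel) + 2 * (\<integral>\<^sup>+y. ennreal ((h2 y)\<^sup>2) \<partial>lborel)"
proof -
  have pointwise: "(g y)\<^sup>2 \<le> 2 * (h1 y)\<^sup>2 + 2 * (h2 y)\<^sup>2" for y
  proof -
    have "(g y)\<^sup>2 \<le> (\<bar>h1 y\<bar> + \<bar>h2 y\<bar>)\<^sup>2"
      using bound[of y] by (metis abs_ge_zero power2_abs power_mono)
    also have "\<dots> \<le> 2 * (h1 y)\<^sup>2 + 2 * (h2 y)\<^sup>2"
      using zero_le_power2[of "\<bar>h1 y\<bar> - \<bar>h2 y\<bar>"] unfolding power2_sum power2_diff power2_abs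
      by linarith
    finally show ?thesis .
  qed
  have "(\<integral>\<^sup>+y. ennreal ((g y)\<^sup>2) \<partial>lborel)
      \<le> (\<integral>\<^sup>+y. 2 * ennreal ((h1 y)\<^sup>2) + 2 * ennreal ((h2 y)\<^sup>2) \<partial>lborel)"
  proof (intro nn_integral_mono)
    fix y
    have "ennreal ((g y)\<^sup>2) \<le> ennreal (2 * (h1 y)\<^sup>2 + 2 * (h2 y)\<^sup>2)"
      using pointwise by (rule ennreal_leI)
    then show "ennreal ((g y)\<^sup>2) \<le> 2 * ennreal ((h1 y)\<^sup>2) + 2 * ennreal ((h2 y)\<^sup>2)"
      by (simp add: ennreal_mult)
  qed
  also have "\<dots> = 2 * (\<integral>\<^sup>+y. ennreal ((h1 y)\<^sup>2) \<partial>lborel) + 2 * (\<integral>\<^sup>+y. ennreal ((h2 y)\<^sup>2) \<partial>lborel)"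
    by (simp add: nn_integral_add nn_integral_cmult)
  finally show ?thesis .
qed

section \<open>Dyadic annuli\<close>

lemma dyadic_scale_bounds_of_annulus_point:
  assumes "0 < l" "x \<in> cube c (l / 2)" "y \<in> cube c (2 ^ Suc m * l) - cube c (2 ^ m * l)"
    and "1 < \<bar>y - x\<bar>" "\<bar>y - x\<bar> < 2"
  shows "4/5 < 2 ^ m * l \<and> 2 ^ m * l < 8"
proof -
  have "l \<le> 2 ^ m * l"
    using assms(1) by simp
  moreover have "c - l / 4 \<le> x" "x \<le> c + l / 4"
    using assms(2) by (simp_all add: cube_def)
  moreover have "c - 2 ^ m * l \<le> y" "y \<le> c + 2 ^ m * l" "\<not> (c - 2 ^ m * l / 2 \<le> y \<and> y \<le> c + 2 ^ m * l / 2)"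
    using assms(3) by (simp_all add: cube_def)
  ultimately show ?thesis
    using assms(4,5) by linarith
qed

lemma annulus_term_eq_0:
  assumes "\<And>y. y \<in> cube c (2 ^ m * l) - cube c (2 ^ (m - 1) * l) \<Longrightarrow> g y = 0"
  shows "annulus_term r g c l m = 0"
proof -
  have "(\<lambda>y. g y * indicator (cube c (2 ^ m * l) - cube c (2 ^ (m - 1) * l)) y) = (\<lambda>y. 0)"
    using assms by (auto simp: fun_eq_iff indicator_def)
  then show ?thesis
    by (simp add: annulus_term_def var_norm_zero)
qed

lemma annulus_term_le:
  assumes [measurable]: "r \<in> borel_measurable borel" "g \<in> borel_measurable borel"
    and r_ge_1: "\<And>x. 1 \<le> r x"
    and exponent: "\<And>y. g y \<noteq> 0 \<Longrightarrow> r y = 2"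
    and M: "0 < M" and L2: "(\<integral>\<^sup>+y. ennreal ((g y)\<^sup>2) \<partial>lborel) \<le> ennreal (M\<^sup>2)"
    and scale: "4/5 < 2 ^ m * l" "2 ^ m * l < 8"
  shows "annulus_term r g c l (Suc m) \<le> ennreal (16 * M)"
proof -
  define h where "h = (\<lambda>y. g y * indicator (cube c (2 ^ Suc m * l) - cube c (2 ^ m * l)) y)"
  have h_meas: "h \<in> borel_measurable borel"
    unfolding h_def cube_def by measurable
  have "(\<integral>\<^sup>+y. ennreal ((h y)\<^sup>2) \<partial>lborel) \<le> (\<integral>\<^sup>+y. ennreal ((g y)\<^sup>2) \<partial>lborel)"
    by (intro nn_integral_mono) (simp add: h_def indicator_def)
  also note L2
  finally have h_L2: "(\<integral>\<^sup>+y. ennreal ((h y)\<^sup>2) \<partial>lborel) \<le> ennreal (M\<^sup>2)" .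
  have h_exponent: "r y = 2" if "h y \<noteq> 0" for y
    using that exponent by (simp add: h_def)
  have h_norm: "var_norm r h \<le> ennreal M"
    using h_meas h_exponent M h_L2 by (rule var_norm_le_of_exponent_2)
  have "1 \<le> 2 ^ Suc m * l"
    using scale(1) by (simp only: power_Suc)
  then have "1 \<le> emeasure lborel (cube c (2 ^ Suc m * l))"
    by (simp add: cube_def mult_ac)
  then have cube_norm: "1 \<le> var_norm r (indicator (cube c (2 ^ Suc m * l)))"
    using r_ge_1 by (intro one_le_var_norm_indicator) (auto simp: cube_def)
  have "annulus_term r g c l (Suc m)
      = ennreal (2 ^ Suc m * l) * var_norm r h / var_norm r (indicator (cube c (2 ^ Suc m * l)))"
    by (simp add: annulus_term_def h_def)
  also have "\<dots> \<le> ennreal (2 ^ Suc m * l) * var_norm r h"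
  proof (rule divide_le_posI_ennreal)
    show "0 < var_norm r (indicator (cube c (2 ^ Suc m * l)))"
      using zero_less_one cube_norm by (rule order.strict_trans2)
    show "ennreal (2 ^ Suc m * l) * var_norm r h
        \<le> var_norm r (indicator (cube c (2 ^ Suc m * l))) * (ennreal (2 ^ Suc m * l) * var_norm r h)"
      using mult_right_mono[OF cube_norm] by simp
  qed
  also have "\<dots> \<le> ennreal 16 * ennreal M"
    using scale h_norm by (intro mult_mono ennreal_leI) (auto simp: mult_ac)
  also have "\<dots> = ennreal (16 * M)"
    using M by (simp add: ennreal_mult)
  finally show ?thesis .
qed

lemma suminf_le_of_dyadic_window:
  fixes f :: "nat \<Rightarrow> ennreal" and a l :: real
  assumes bound: "\<And>m. f m \<le> C"
    and window: "\<And>m. f m \<noteq> 0 \<Longrightarrow> a < 2 ^ m * l \<and> 2 ^ m * l < 16 * a"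
  shows "suminf f \<le> 4 * C"
proof (cases "\<exists>m. f m \<noteq> 0")
  case False
  then have "f = (\<lambda>_. 0)"
    by auto
  then show ?thesis
    by simp
next
  case True
  define m0 where "m0 = (LEAST m. f m \<noteq> 0)"
  have f_m0: "f m0 \<noteq> 0"
    unfolding m0_def using True by (rule LeastI_ex)
  from window[OF f_m0] have "0 < 2 ^ m0 * l"
    by linarith
  then have "0 < l"
    by (simp add: zero_less_mult_iff)
  have vanish: "f m = 0" if "m \<notin> {m0..<m0 + 4}" for m
  proof (rule ccontr)
    assume f_m: "f m \<noteq> 0"
    then have "m0 + 4 \<le> m"
      using that Least_le[of "\<lambda>m. f m \<noteq> 0" m] unfolding m0_def by auto
    then have "16 * (2 ^ m0 * l) \<le> 2 ^ m * l"
      using \<open>0 < l\<close> power_increasing[of "m0 + 4" m "2::real"] by (simp add: power_add)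
    with window[OF f_m] window[OF f_m0] show False by linarith
  qed
  have "suminf f = (\<Sum>m\<in>{m0..<m0 + 4}. f m)"
    using vanish by (intro suminf_finite) auto
  also have "\<dots> \<le> 4 * C"
    using sum_mono[of "{m0..<m0 + 4}" f "\<lambda>_. C"] bound by simp
  finally show ?thesis .
qed

lemma annulus_sum_le:
  assumes [measurable]: "r \<in> borel_measurable borel" "g \<in> borel_measurable borel"
    and "\<And>x. 1 \<le> r x"
    and exponent: "\<And>y. g y \<noteq> 0 \<Longrightarrow> r y = 2"
    and near: "\<And>y. g y \<noteq> 0 \<Longrightarrow> (1 < \<bar>y - x\<bar> \<and> \<bar>y - x\<bar> < 2) \<or> (1 < \<bar>y - z\<bar> \<and> \<bar>y - z\<bar> < 2)"
    and "0 < M" "(\<integral>\<^sup>+y. ennreal ((g y)\<^sup>2) \<partial>lborel) \<le> ennreal (M\<^sup>2)"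
    and l: "0 < l" and x: "x \<in> cube c (l / 2)" and z: "z \<in> cube c (l / 2)"
  shows "(\<Sum>m. annulus_term r g c l (Suc m)) \<le> 4 * ennreal (16 * M)"
proof -
  have window: "4/5 < 2 ^ m * l \<and> 2 ^ m * l < 8" if nonzero: "annulus_term r g c l (Suc m) \<noteq> 0" for m
  proof -
    obtain y where y: "y \<in> cube c (2 ^ Suc m * l) - cube c (2 ^ m * l)" "g y \<noteq> 0"
      using annulus_term_eq_0[of c "Suc m" l g r] nonzero by (simp only: diff_Suc_1) blast
    from near[OF y(2)] show ?thesis
      using dyadic_scale_bounds_of_annulus_point[OF l x y(1)]
        dyadic_scale_bounds_of_annulus_point[OF l z y(1)] by blast
  qed
  show ?thesis
  proof (rule suminf_le_of_dyadic_window[where a = "4/5" and l = l])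
    fix m
    show "annulus_term r g c l (Suc m) \<le> ennreal (16 * M)"
    proof (cases "annulus_term r g c l (Suc m) = 0")
      case False
      with window[OF False] show ?thesis
        using annulus_term_le[OF assms(1-4,6,7)] by blast
    qed simp
  next
    fix m
    assume "annulus_term r g c l (Suc m) \<noteq> 0"
    from window[OF this] show "4/5 < 2 ^ m * l \<and> 2 ^ m * l < 16 * (4/5)"
      by simp
  qed
qed

lemma SUP_cubes_less_top:
  fixes F :: "real \<Rightarrow> real \<Rightarrow> real \<Rightarrow> real \<Rightarrow> ennreal"
  assumes "\<And>c l x z. 0 < l \<Longrightarrow> x \<in> cube c (l / 2) \<Longrightarrow> z \<in> cube c (l / 2) \<Longrightarrow> F c l x z \<le> C"
    and "C < \<infinity>"
  shows "(SUP (c, l, x, z) \<in> {(c, l, x, z). l > 0 \<and> x \<in> cube c (l / 2) \<and> z \<in> cube c (l / 2)}.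
    F c l x z) < \<infinity>"
proof -
  have "(SUP (c, l, x, z) \<in> {(c, l, x, z). l > 0 \<and> x \<in> cube c (l / 2) \<and> z \<in> cube c (l / 2)}.
      F c l x z) \<le> C"
    using assms(1) by (auto intro!: SUP_least)
  then show ?thesis
    using assms(2) by (rule order.strict_trans1)
qed

section \<open>The kernel\<close>

lemma K1_cases: "K1 y = 0 \<or> K1 y = 1 \<and> y \<in> {2..3}"
  by (auto simp: K1_def indicator_def)

lemma K1_measurable [measurable]: "K1 \<in> borel_measurable borel"
  unfolding K1_def by measurable

lemma K2_nonzero_imp: "K2 b t \<noteq> 0 \<Longrightarrow> 0 < t \<and> t < 1"
  by (auto simp: K2_def split: if_splits)

lemma K2_measurable [measurable]: "K2 b \<in> borel_measurable borel"
  unfolding K2_def by measurable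

lemma K2_square:
  assumes "0 < t" "t < 1"
  shows "(K2 b t)\<^sup>2 = (1 - ln t) powr (-(1 + b)) / t"
proof -
  have log_pos: "0 < 1 - ln t"
    using ln_less_zero[OF assms] by linarith
  have "(K2 b t)\<^sup>2 = (t powr (-1/2))\<^sup>2 * ((1 - ln t) powr (-(1 + b)/2))\<^sup>2"
    using assms by (simp add: K2_def ln_div power_mult_distrib)
  also have "\<dots> = t powr (-1) * (1 - ln t) powr (-(1 + b))"
    using assms log_pos by (simp add: power2_eq_square powr_add[symmetric])
  finally show ?thesis
    using assms by (simp add: powr_minus divide_inverse)
qed

lemma K2_square_antiderivative:
  assumes "0 < b" "0 < t" "t < 1"
  shows "((\<lambda>t. (1 - ln t) powr (-b) / b) has_real_derivative (1 - ln t) powr (-(1 + b)) / t) (at t)"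
proof -
  have log_pos: "0 < 1 - ln t"
    using ln_less_zero[OF assms(2,3)] by linarith
  have "((\<lambda>t. (1 - ln t) powr (-b) / b) has_real_derivative
      ((-b) * (1 - ln t) powr (-b - 1) * (- (1 / t))) / b) (at t)"
    using assms log_pos by (auto intro!: derivative_eq_intros)
  moreover have "-b - 1 = -(1 + b)" by simp
  ultimately show ?thesis
    using assms(1) by simp
qed

lemma log_density_integral:
  assumes "0 < b"
  shows "set_integrable lborel {0<..<1} (\<lambda>t. (1 - ln t) powr (-(1 + b)) / t)"
    and "(LBINT t=0..1. (1 - ln t) powr (-(1 + b)) / t) = 1 / b"
proof -
  define f where "f = (\<lambda>t. (1 - ln t) powr (-(1 + b)) / t)"
  define F where "F = (\<lambda>t. (1 - ln t) powr (-b) / b)"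
  have deriv: "DERIV F t :> f t" if "0 < ereal t" "ereal t < 1" for t
    using K2_square_antiderivative[OF assms] that by (simp add: F_def f_def)
  have cont: "isCont f t" if "0 < ereal t" "ereal t < 1" for t
  proof -
    have "0 < t" "t < 1"
      using that by auto
    moreover have "0 < 1 - ln t"
      using ln_less_zero[OF calculation] by linarith
    ultimately show ?thesis
      unfolding f_def by (auto intro!: continuous_intros)
  qed
  have nonneg: "AE t in lborel. 0 < ereal t \<longrightarrow> ereal t < 1 \<longrightarrow> 0 \<le> f t"
    by (simp add: f_def)
  have "filterlim (\<lambda>t::real. 1 - ln t) at_top (at_right 0)"
    by real_asymp
  then have "((\<lambda>t. (1 - ln t) powr (-b)) \<longlongrightarrow> 0) (at_right 0)"
    using assms by (intro tendsto_neg_powr) auto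
  then have "(F \<longlongrightarrow> 0) (at_right 0)"
    unfolding F_def using tendsto_divide_zero by blast
  then have F0: "((F \<circ> real_of_ereal) \<longlongrightarrow> 0) (at_right (0::ereal))"
    by (simp add: zero_ereal_def ereal_tendsto_simps)
  have "(F \<longlongrightarrow> 1 / b) (at_left 1)"
    unfolding F_def using assms by (auto intro!: tendsto_eq_intros)
  then have F1: "((F \<circ> real_of_ereal) \<longlongrightarrow> 1 / b) (at_left (1::ereal))"
    by (simp add: one_ereal_def ereal_tendsto_simps)
  have "einterval 0 1 = {0<..<(1::real)}"
    by (auto simp: einterval_def)
  with interval_integral_FTC_nonneg[of 0 1 F f, OF _ deriv cont nonneg F0 F1]
  show "set_integrable lborel {0<..<1} (\<lambda>t. (1 - ln t) powr (-(1 + b)) / t)"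
    and "(LBINT t=0..1. (1 - ln t) powr (-(1 + b)) / t) = 1 / b"
    by (simp_all add: f_def)
qed

lemma nn_integral_K2_square:
  assumes "0 < b"
  shows "(\<integral>\<^sup>+t. ennreal ((K2 b t)\<^sup>2) \<partial>lborel) = ennreal (1 / b)"
proof -
  have "(\<integral>\<^sup>+t. ennreal ((K2 b t)\<^sup>2) \<partial>lborel)
      = (\<integral>\<^sup>+t. ennreal (indicator {0<..<1} t * ((1 - ln t) powr (-(1 + b)) / t)) \<partial>lborel)"
  proof (intro nn_integral_cong)
    fix t :: real
    show "ennreal ((K2 b t)\<^sup>2) = ennreal (indicator {0<..<1} t * ((1 - ln t) powr (-(1 + b)) / t))"
      using K2_nonzero_imp[of b t] by (cases "0 < t \<and> t < 1") (auto simp: K2_square)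
  qed
  also have "\<dots> = ennreal (1 / b)"
    using log_density_integral[OF assms]
    by (subst nn_integral_eq_integral)
      (auto simp: set_integrable_def interval_lebesgue_integral_def set_lebesgue_integral_def
        einterval_def indicator_def)
  finally show ?thesis .
qed

lemma nn_integral_K2_square_affine:
  assumes "0 < b" "\<bar>s\<bar> = 1"
  shows "(\<integral>\<^sup>+y. ennreal ((K2 b (a + s * y))\<^sup>2) \<partial>lborel) = ennreal (1 / b)"
  using nn_integral_real_affine[of "\<lambda>t. ennreal ((K2 b t)\<^sup>2)" s a] assms
  by (simp add: nn_integral_K2_square)

lemma nn_integral_square_le_of_K2_pair:
  assumes "0 < b" "\<bar>s\<bar> = 1" "\<bar>s'\<bar> = 1"
    and "\<And>y. \<bar>g y\<bar> \<le> \<bar>K2 b (a + s * y)\<bar> + \<bar>K2 b (a' + s' * y)\<bar>"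
  shows "(\<integral>\<^sup>+y. ennreal ((g y)\<^sup>2) \<partial>lborel) \<le> ennreal ((2 / sqrt b)\<^sup>2)"
proof -
  have "(\<integral>\<^sup>+y. ennreal ((g y)\<^sup>2) \<partial>lborel) \<le> 2 * ennreal (1 / b) + 2 * ennreal (1 / b)"
    using nn_integral_square_le_of_abs_le_add[of "\<lambda>y. K2 b (a + s * y)" "\<lambda>y. K2 b (a' + s' * y)" g]
    by (simp add: assms nn_integral_K2_square_affine)
  also have "\<dots> = ennreal ((2 / sqrt b)\<^sup>2)"
    using assms(1) ennreal_plus[of "2 / b" "2 / b"] ennreal_mult[of 2 "1 / b"]
    by (simp add: power_divide)
  finally show ?thesis .
qed

lemma L2_bound_first_variable:
  assumes "0 < \<beta>"
  shows "(\<integral>\<^sup>+y. ennreal ((K1 y * K2 \<beta> (x - y - 1) - K1 y * K2 \<beta> (z - y - 1))\<^sup>2) \<partial>lborel)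
    \<le> ennreal ((2 / sqrt \<beta>)\<^sup>2)"
proof -
  have reflect: "x - 1 + -1 * y = x - y - 1" "z - 1 + -1 * y = z - y - 1" for y
    by simp_all
  have pointwise: "\<bar>K1 y * K2 \<beta> (x - y - 1) - K1 y * K2 \<beta> (z - y - 1)\<bar>
      \<le> \<bar>K2 \<beta> (x - 1 + -1 * y)\<bar> + \<bar>K2 \<beta> (z - 1 + -1 * y)\<bar>" for y
    unfolding reflect
    using K1_cases[of y] abs_triangle_ineq4[of "K2 \<beta> (x - y - 1)" "K2 \<beta> (z - y - 1)"]
    by (elim disjE conjE) simp_all
  show ?thesis
    by (rule nn_integral_square_le_of_K2_pair[OF assms _ _ pointwise]) simp_all
qed

lemma L2_bound_second_variable:
  assumes "0 < \<beta>"
  shows "(\<integral>\<^sup>+y. ennreal ((K1 x * K2 \<beta> (y - x - 1) - K1 z * K2 \<beta> (y - z - 1))\<^sup>2) \<partial>lborel)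
    \<le> ennreal ((2 / sqrt \<beta>)\<^sup>2)"
proof -
  have shift: "- x - 1 + 1 * y = y - x - 1" "- z - 1 + 1 * y = y - z - 1" for y
    by simp_all
  have pointwise: "\<bar>K1 x * K2 \<beta> (y - x - 1) - K1 z * K2 \<beta> (y - z - 1)\<bar>
      \<le> \<bar>K2 \<beta> (- x - 1 + 1 * y)\<bar> + \<bar>K2 \<beta> (- z - 1 + 1 * y)\<bar>" for y
    unfolding shift
    using K1_cases[of x] K1_cases[of z] abs_triangle_ineq4[of "K2 \<beta> (y - x - 1)" "K2 \<beta> (y - z - 1)"]
    by (elim disjE conjE) simp_all
  show ?thesis
    by (rule nn_integral_square_le_of_K2_pair[OF assms _ _ pointwise]) simp_all
qed

lemma support_first_variable:
  assumes "K1 y * K2 b (x - y - 1) - K1 y * K2 b (z - y - 1) \<noteq> 0"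
  shows "y \<in> {2..5} \<and> (1 < \<bar>y - x\<bar> \<and> \<bar>y - x\<bar> < 2 \<or> 1 < \<bar>y - z\<bar> \<and> \<bar>y - z\<bar> < 2)"
proof -
  from assms have "K1 y \<noteq> 0" and "K2 b (x - y - 1) \<noteq> 0 \<or> K2 b (z - y - 1) \<noteq> 0"
    by auto
  with K1_cases[of y] K2_nonzero_imp[of b "x - y - 1"] K2_nonzero_imp[of b "z - y - 1"]
  show ?thesis
    by auto
qed

lemma support_second_variable:
  assumes "K1 x * K2 b (y - x - 1) - K1 z * K2 b (y - z - 1) \<noteq> 0"
  shows "y \<in> {2..5} \<and> (1 < \<bar>y - x\<bar> \<and> \<bar>y - x\<bar> < 2 \<or> 1 < \<bar>y - z\<bar> \<and> \<bar>y - z\<bar> < 2)"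
proof -
  from assms have "K1 x \<noteq> 0 \<and> K2 b (y - x - 1) \<noteq> 0 \<or> K1 z \<noteq> 0 \<and> K2 b (y - z - 1) \<noteq> 0"
    by auto
  with K1_cases[of x] K1_cases[of z] K2_nonzero_imp[of b "y - x - 1"] K2_nonzero_imp[of b "y - z - 1"]
  show ?thesis
    by auto
qed

theorem mainTheorem19:
  fixes \<beta> :: real and r :: "real \<Rightarrow> ereal"
  assumes "\<beta> > 0"
    and "P_log r"
    and "\<forall>x \<in> {2..5}. r x = 2"
    and "ess_inf_on {-7..14} r > 1"
  shows "H1 r (\<lambda>x y. K1 y * K2 \<beta> (x - y - 1)) \<and> H2 r (\<lambda>x y. K1 y * K2 \<beta> (x - y - 1))"
proof -
  from \<open>P_log r\<close> have r_meas: "r \<in> borel_measurable borel" and r_ge_1: "\<And>x. 1 \<le> r x"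
    by (auto simp: P_log_def)
  have M: "0 < 2 / sqrt \<beta>" and bound_finite: "4 * ennreal (16 * (2 / sqrt \<beta>)) < \<infinity>"
    using \<open>\<beta> > 0\<close> by (simp_all add: ennreal_mult_less_top)
  note sum_le = annulus_sum_le[OF r_meas _ r_ge_1 _ _ M]
  have "H1 r (\<lambda>x y. K1 y * K2 \<beta> (x - y - 1))"
    unfolding H1_def
  proof (rule SUP_cubes_less_top[OF _ bound_finite], rule sum_le)
    show "r y = 2" and "1 < \<bar>y - x\<bar> \<and> \<bar>y - x\<bar> < 2 \<or> 1 < \<bar>y - z\<bar> \<and> \<bar>y - z\<bar> < 2"
      if "K1 y * K2 \<beta> (x - y - 1) - K1 y * K2 \<beta> (z - y - 1) \<noteq> 0" for x y z
      using support_first_variable[OF that] assms(3) by auto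
  qed (use L2_bound_first_variable \<open>\<beta> > 0\<close> in auto)
  moreover have "H2 r (\<lambda>x y. K1 y * K2 \<beta> (x - y - 1))"
    unfolding H2_def
  proof (rule SUP_cubes_less_top[OF _ bound_finite], rule sum_le)
    show "r y = 2" and "1 < \<bar>y - x\<bar> \<and> \<bar>y - x\<bar> < 2 \<or> 1 < \<bar>y - z\<bar> \<and> \<bar>y - z\<bar> < 2"
      if "K1 x * K2 \<beta> (y - x - 1) - K1 z * K2 \<beta> (y - z - 1) \<noteq> 0" for x y z
      using support_second_variable[OF that] assms(3) by auto
  qed (use L2_bound_second_variable \<open>\<beta> > 0\<close> in auto)
  ultimately show ?thesis
    by blast
qed

end
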